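(* Let $\ell\ge1$ and $d\ge2$. Assign to every ordered pair of distinct hosts $(\mathbf{h}^s,\mathbf{h}^d)$ of $\mathcal{B}(\ell,d)$ its descending dipath, and give it the wavelength (color) $w_1\cdots w_\ell\in\mathbb{Z}_d^\ell$ defined by $w_i=(h^d_i-h^s_i)\bmod d$. Then any two dipaths sharing an arc receive different wavelengths, and at most $d^\ell-1$ wavelengths are used. Consequently, $$d^\ell-d^{\ell-1}\le\omega(\mathcal{B}(\ell,d))\le d^\ell-1.$$
   Context: The BCube $\mathcal{B}(\ell,d)$ ($\ell,d$ positive integers) is the symmetric digraph defined as follows, with $\mathbb{Z}_d=\{0,1,\dots,d-1\}$. - Hosts: all vectors $\mathbf{h}=h_1\cdots h_\ell\in\mathbb{Z}_d^{\ell}$. - Switches: for each layer $k\in\{1,\dots,\ell\}$, one switch $\mathbf{s}^k$ for each vector $s^k_1\cdots s^k_{\ell-1}\in\mathbb{Z}_d^{\ell-1}$. - Links: host $\mathbf{h}$ and layer-$k$ switch $\mathbf{s}^k$ are joined if and only if $s^k_1\cdots s^k_{\ell-1}=h_1\cdots h_{k-1}h_{k+1}\cdots h_\ell$. Each such link gives an uplink arc (host $\to$ switch) and a downlink arc (switch $\to$ host) at layer $k$. Descending dipath: let $\mathbf{h}^s\neq\mathbf{h}^d$ be hosts, and let $i_1>\dots>i_m$ be the coordinates in which they differ. Define $\mathbf{h}^0=\mathbf{h}^s$, and let $\mathbf{h}^j$ be $\mathbf{h}^{j-1}$ with its $i_j$-th coordinate replaced by $h^d_{i_j}$. The descending dipath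 goes, for each $j=1,\dots,m$, from $\mathbf{h}^{j-1}$ through the unique layer-$i_j$ switch adjacent to both $\mathbf{h}^{j-1}$ and $\mathbf{h}^j$, to $\mathbf{h}^j$. A host-to-host routing $R$ assigns to every ordered pair of distinct hosts a directed path between them. $\omega(\mathcal{B}(\ell,d),R)$ is the minimum number of colors needed to color the paths of $R$ so that any two paths sharing an arc get different colors. The optical index is $\omega(\mathcal{B}(\ell,d))=\min_R\omega(\mathcal{B}(\ell,d),R)$, the minimum taken over all host-to-host routings $R$. *)

theory Defs
  imports Main
begin

(* Hosts are vectors h_1...h_l over Z_d, represented
   as lists of length l with entries < d (coordinate i is list index i-1).
   A layer-k switch (k in {1..l}) is labelled by a vector of length l-1. *)
datatype vertex = Host "nat list" | Switch nat "nat list"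

definition remove_nth :: "nat \<Rightarrow> 'a list \<Rightarrow> 'a list" where
  "remove_nth i xs = take i xs @ drop (Suc i) xs"

definition host_set :: "nat \<Rightarrow> nat \<Rightarrow> nat list set" where
  "host_set l d = {h. length h = l \<and> (\<forall>x\<in>set h. x < d)}"

definition host_pairs :: "nat \<Rightarrow> nat \<Rightarrow> (nat list \<times> nat list) set" where
  "host_pairs l d = {(a, b). a \<in> host_set l d \<and> b \<in> host_set l d \<and> a \<noteq> b}"

definition is_arc :: "nat \<Rightarrow> nat \<Rightarrow> vertex \<times> vertex \<Rightarrow> bool" where
  "is_arc l d e \<longleftrightarrow>
     (\<exists>h k. h \<in> host_set l d \<and> 1 \<le> k \<and> k \<le> l \<and>
        (e = (Host h, Switch k (remove_nth (k - 1) h)) \<or>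
         e = (Switch k (remove_nth (k - 1) h), Host h)))"

definition arcs_of :: "vertex list \<Rightarrow> (vertex \<times> vertex) set" where
  "arcs_of p = set (zip p (tl p))"

definition is_dipath :: "nat \<Rightarrow> nat \<Rightarrow> vertex list \<Rightarrow> vertex \<Rightarrow> vertex \<Rightarrow> bool" where
  "is_dipath l d p u v \<longleftrightarrow>
     p \<noteq> [] \<and> hd p = u \<and> last p = v \<and> distinct p \<and> (\<forall>e\<in>arcs_of p. is_arc l d e)"

definition is_routing :: "nat \<Rightarrow> nat \<Rightarrow> (nat list \<times> nat list \<Rightarrow> vertex list) \<Rightarrow> bool" where
  "is_routing l d R \<longleftrightarrow> (\<forall>(a, b)\<in>host_pairs l d. is_dipath l d (R (a, b)) (Host a) (Host b))"

definition proper_coloring ::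
  "nat \<Rightarrow> nat \<Rightarrow> (nat list \<times> nat list \<Rightarrow> vertex list) \<Rightarrow> (nat list \<times> nat list \<Rightarrow> 'c) \<Rightarrow> bool" where
  "proper_coloring l d R c \<longleftrightarrow>
     (\<forall>p\<in>host_pairs l d. \<forall>q\<in>host_pairs l d.
        p \<noteq> q \<and> arcs_of (R p) \<inter> arcs_of (R q) \<noteq> {} \<longrightarrow> c p \<noteq> c q)"

definition omega_R :: "nat \<Rightarrow> nat \<Rightarrow> (nat list \<times> nat list \<Rightarrow> vertex list) \<Rightarrow> nat" where
  "omega_R l d R = (LEAST k. \<exists>c :: nat list \<times> nat list \<Rightarrow> nat.
       proper_coloring l d R c \<and> card (c ` host_pairs l d) = k)"

definition optical_index :: "nat \<Rightarrow> nat \<Rightarrow> nat" where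
  "optical_index l d = (LEAST k. \<exists>R. is_routing l d R \<and> omega_R l d R = k)"

fun desc_walk :: "nat list \<Rightarrow> nat list \<Rightarrow> nat list \<Rightarrow> vertex list" where
  "desc_walk h t [] = [Host h]"
| "desc_walk h t (i # is) =
     Host h # Switch (Suc i) (remove_nth i h) # desc_walk (h[i := t ! i]) t is"

definition desc_path :: "nat \<Rightarrow> nat list \<Rightarrow> nat list \<Rightarrow> vertex list" where
  "desc_path l hs ht = desc_walk hs ht (rev (filter (\<lambda>i. hs ! i \<noteq> ht ! i) [0..<l]))"

definition wavelength :: "nat \<Rightarrow> nat list \<Rightarrow> nat list \<Rightarrow> nat list" where
  "wavelength d hs ht = map (\<lambda>(a, b). nat ((int b - int a) mod int d)) (zip hs ht)"

end

theory Submission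
  imports Defs "HOL-Library.Countable" "HOL-Library.FuncSet"
begin

text \<open>
  The hosts met by the descending dipath from a to b are the crossovers take m a @ drop m b,
  and every arc of it is the uplink or the downlink at which coordinate i is changed. Hence a
  shared arc fixes the crossover point m and the host there, which supplies the coordinates of a
  below m and those of b from m on; the wavelength, i.e. the coordinatewise differences b - a
  mod d, then supplies the missing coordinates. So two dipaths sharing an arc and a wavelength
  are equal. As a \<noteq> b, the zero vector is never a wavelength, leaving at most d^l - 1 of them.

  For the lower bound, the hosts with first coordinate 0 together with the switches of layers
  k \<ge> 2 adjacent to them can only be left through a layer-1 uplink, as such a switch still sees
  the first coordinate. So each of the d^(l-1) * (d^l - d^(l-1)) dipaths from a host with first
  coordinate 0 to one without uses one of d^(l-1) such uplinks, and by pigeonhole one uplink is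
  shared by d^l - d^(l-1) dipaths, which all need different colours.
\<close>

lemma arcs_of_Cons_Cons: "arcs_of (u # v # p) = insert (u, v) (arcs_of (v # p))"
  by (simp add: arcs_of_def)

lemma arcs_of_singleton [simp]: "arcs_of [u] = {}"
  by (simp add: arcs_of_def)

lemma arcs_of_exit:
  assumes "p \<noteq> []" "hd p \<in> A" "last p \<notin> A"
  shows "\<exists>(u, v)\<in>arcs_of p. u \<in> A \<and> v \<notin> A"
  using assms
proof (induction p rule: induct_list012)
  case (3 u v p)
  show ?case
  proof (cases "v \<in> A")
    case True
    then obtain e where "e \<in> arcs_of (v # p)" "fst e \<in> A" "snd e \<notin> A"
      using "3.IH"(2) "3.prems"(3) by fastforce
    then show ?thesis by (force simp: arcs_of_Cons_Cons)
  next
    case False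
    then show ?thesis using "3.prems"(2) by (auto simp: arcs_of_Cons_Cons)
  qed
qed auto

lemma host_set_eq_lists: "host_set l d = {xs. set xs \<subseteq> {..<d} \<and> length xs = l}"
  by (auto simp: host_set_def)

lemma finite_host_set [simp]: "finite (host_set l d)"
  unfolding host_set_eq_lists by (rule finite_lists_length_eq) simp

lemma card_host_set: "card (host_set l d) = d ^ l"
  unfolding host_set_eq_lists by (subst card_lists_length_eq) simp_all

lemma finite_host_pairs [simp]: "finite (host_pairs l d)"
  by (rule finite_subset[of _ "host_set l d \<times> host_set l d"]) (auto simp: host_pairs_def)

lemma length_host: "h \<in> host_set l d \<Longrightarrow> length h = l"
  by (simp add: host_set_def)

lemma nth_host_less: "h \<in> host_set l d \<Longrightarrow> j < l \<Longrightarrow> h ! j < d"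
  by (simp add: host_set_def)

definition crossover :: "nat \<Rightarrow> 'a list \<Rightarrow> 'a list \<Rightarrow> 'a list" where
  "crossover m a b = take m a @ drop m b"

lemma length_crossover [simp]: "length a = length b \<Longrightarrow> length (crossover m a b) = length b"
  by (simp add: crossover_def)

lemma nth_crossover:
  "length a = length b \<Longrightarrow> j < length b \<Longrightarrow>
    crossover m a b ! j = (if j < m then a ! j else b ! j)"
  by (simp add: crossover_def nth_append)

lemma crossover_0 [simp]: "crossover 0 a b = b"
  by (simp add: crossover_def)

lemma crossover_length: "length a = m \<Longrightarrow> length b = m \<Longrightarrow> crossover m a b = a"
  by (simp add: crossover_def)

lemma crossover_cong:
  assumes "length a = length b" "m \<le> n" "\<And>j. m \<le> j \<Longrightarrow> j < n \<Longrightarrow> a ! j = b ! j"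
  shows "crossover m a b = crossover n a b"
  by (rule nth_equalityI) (use assms in \<open>auto simp: nth_crossover\<close>)

lemma crossover_update:
  "length a = length b \<Longrightarrow> (crossover (Suc i) a b)[i := b ! i] = crossover i a b"
  by (rule nth_equalityI) (auto simp: nth_crossover nth_list_update)

lemma crossover_in_host_set:
  "a \<in> host_set l d \<Longrightarrow> b \<in> host_set l d \<Longrightarrow> crossover m a b \<in> host_set l d"
  by (auto simp: host_set_def crossover_def dest: in_set_takeD in_set_dropD)

text \<open>The invariant of the descending walk: the current host is crossover m a b, and \<open>is\<close>
  lists the coordinates below m in which a and b differ, in decreasing order.\<close>

definition descending_schedule :: "nat \<Rightarrow> nat list \<Rightarrow> nat list \<Rightarrow> nat list \<Rightarrow> bool" where
  "descending_schedule m a b is \<longleftrightarrow> sorted_wrt (>) is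
     \<and> (\<forall>i\<in>set is. i < m \<and> a ! i \<noteq> b ! i) \<and> (\<forall>j<m. j \<notin> set is \<longrightarrow> a ! j = b ! j)"

lemma descending_schedule_Nil:
  "descending_schedule m a b [] \<Longrightarrow> length a = length b \<Longrightarrow> crossover m a b = b"
  using crossover_cong[of a b 0 m] by (simp add: descending_schedule_def)

lemma descending_schedule_Cons:
  assumes "descending_schedule m a b (i # is)" "length a = length b"
  shows "descending_schedule i a b is" "crossover m a b = crossover (Suc i) a b"
    "i < m" "a ! i \<noteq> b ! i"
proof -
  show "descending_schedule i a b is" "i < m" "a ! i \<noteq> b ! i"
    using assms(1) by (auto simp: descending_schedule_def)
  have "a ! j = b ! j" if "Suc i \<le> j" "j < m" for j
    using assms(1) that by (fastforce simp: descending_schedule_def)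
  then show "crossover m a b = crossover (Suc i) a b"
    using crossover_cong[of a b "Suc i" m] assms \<open>i < m\<close> by simp
qed

lemma descending_schedule_desc_path:
  "length a = l \<Longrightarrow> descending_schedule l a b (rev (filter (\<lambda>i. a ! i \<noteq> b ! i) [0..<l]))"
  by (auto simp: descending_schedule_def sorted_wrt_rev sorted_wrt_filter)

lemma arcs_of_desc_walk_Cons:
  "arcs_of (desc_walk h t (i # is)) =
    {(Host h, Switch (Suc i) (remove_nth i h)), (Switch (Suc i) (remove_nth i h), Host (h[i := t ! i]))}
    \<union> arcs_of (desc_walk (h[i := t ! i]) t is)"
  by (cases "is") (auto simp: arcs_of_Cons_Cons)

lemma desc_walk_not_Nil [simp]: "desc_walk h t is \<noteq> []"
  by (cases "is") auto

lemma hd_desc_walk [simp]: "hd (desc_walk h t is) = Host h"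
  by (cases "is") auto

lemma remove_nth_list_update [simp]: "remove_nth i (h[i := x]) = remove_nth i h"
  by (simp add: remove_nth_def)

lemma host_in_desc_walk: "Host g \<in> set (desc_walk h t is) \<Longrightarrow> j \<notin> set is \<Longrightarrow> g ! j = h ! j"
  by (induction "is" arbitrary: h) auto

lemma switch_in_desc_walk: "Switch k s \<in> set (desc_walk h t is) \<Longrightarrow> \<exists>i\<in>set is. k = Suc i"
  by (induction "is" arbitrary: h) auto

lemma last_desc_walk:
  "descending_schedule m a b is \<Longrightarrow> length a = length b \<Longrightarrow>
    last (desc_walk (crossover m a b) b is) = Host b"
proof (induction "is" arbitrary: m)
  case Nil
  then show ?case by (simp add: descending_schedule_Nil)
next
  case (Cons i "is")
  note step = descending_schedule_Cons[OF Cons.prems]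
  show ?case using Cons.IH[OF step(1) Cons.prems(2)] Cons.prems(2)
    by (simp add: step(2) crossover_update)
qed

lemma distinct_desc_walk:
  "descending_schedule m a b is \<Longrightarrow> length a = length b \<Longrightarrow> m \<le> length b \<Longrightarrow>
    distinct (desc_walk (crossover m a b) b is)"
proof (induction "is" arbitrary: m)
  case Nil
  then show ?case by simp
next
  case (Cons i "is")
  note step = descending_schedule_Cons[OF Cons.prems(1,2)]
  let ?rest = "desc_walk (crossover i a b) b is"
  have i: "i < length b" "i \<notin> set is"
    using step(1,3) Cons.prems(3) by (auto simp: descending_schedule_def)
  have "Host (crossover (Suc i) a b) \<notin> set ?rest"
  proof
    assume "Host (crossover (Suc i) a b) \<in> set ?rest"
    then have "crossover (Suc i) a b ! i = crossover i a b ! i"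
      using host_in_desc_walk i(2) by blast
    then show False using i(1) step(4) Cons.prems(2) by (simp add: nth_crossover)
  qed
  moreover have "Switch (Suc i) s \<notin> set ?rest" for s
    using switch_in_desc_walk[of "Suc i" s] i by auto
  moreover have "distinct ?rest"
    using Cons.IH[OF step(1) Cons.prems(2)] step(3) Cons.prems(3) by simp
  ultimately show ?case
    using Cons.prems(2) by (simp add: step(2) crossover_update)
qed

definition up_arc :: "nat list \<Rightarrow> nat list \<Rightarrow> nat \<Rightarrow> vertex \<times> vertex" where
  "up_arc a b i =
    (Host (crossover (Suc i) a b), Switch (Suc i) (remove_nth i (crossover (Suc i) a b)))"

definition down_arc :: "nat list \<Rightarrow> nat list \<Rightarrow> nat \<Rightarrow> vertex \<times> vertex" where
  "down_arc a b i = (Switch (Suc i) (remove_nth i (crossover i a b)), Host (crossover i a b))"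

lemma arcs_of_desc_walk:
  assumes "descending_schedule m a b is" "length a = length b"
    and "e \<in> arcs_of (desc_walk (crossover m a b) b is)"
  shows "\<exists>i\<in>set is. e = up_arc a b i \<or> e = down_arc a b i"
  using assms
proof (induction "is" arbitrary: m)
  case Nil
  then show ?case by simp
next
  case (Cons i "is")
  note step = descending_schedule_Cons[OF Cons.prems(1,2)]
  have "remove_nth i (crossover (Suc i) a b) = remove_nth i (crossover i a b)"
    using crossover_update[OF Cons.prems(2), of i] remove_nth_list_update by metis
  then have "arcs_of (desc_walk (crossover m a b) b (i # is))
      = {up_arc a b i, down_arc a b i} \<union> arcs_of (desc_walk (crossover i a b) b is)"
    unfolding step(2) arcs_of_desc_walk_Cons crossover_update[OF Cons.prems(2)]
    by (simp add: up_arc_def down_arc_def)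
  then show ?case using Cons.IH[OF step(1) Cons.prems(2)] Cons.prems(3) by auto
qed

lemma is_arc_up_arc:
  "a \<in> host_set l d \<Longrightarrow> b \<in> host_set l d \<Longrightarrow> i < l \<Longrightarrow> is_arc l d (up_arc a b i)"
  unfolding is_arc_def up_arc_def
  by (rule exI[of _ "crossover (Suc i) a b"], rule exI[of _ "Suc i"]) (simp add: crossover_in_host_set)

lemma is_arc_down_arc:
  "a \<in> host_set l d \<Longrightarrow> b \<in> host_set l d \<Longrightarrow> i < l \<Longrightarrow> is_arc l d (down_arc a b i)"
  unfolding is_arc_def down_arc_def
  by (rule exI[of _ "crossover i a b"], rule exI[of _ "Suc i"]) (simp add: crossover_in_host_set)

lemma arcs_of_desc_path:
  assumes "a \<in> host_set l d" "b \<in> host_set l d" "e \<in> arcs_of (desc_path l a b)"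
  shows "\<exists>i<l. e = up_arc a b i \<or> e = down_arc a b i"
proof -
  have len: "length a = l" "length b = l" using assms(1,2) by (simp_all add: length_host)
  have "e \<in> arcs_of (desc_walk (crossover l a b) b (rev (filter (\<lambda>i. a ! i \<noteq> b ! i) [0..<l])))"
    using assms(3) len by (simp add: desc_path_def crossover_length)
  from arcs_of_desc_walk[OF descending_schedule_desc_path[OF len(1)] _ this] len
  show ?thesis by auto
qed

lemma desc_path_is_dipath:
  assumes "a \<in> host_set l d" "b \<in> host_set l d"
  shows "is_dipath l d (desc_path l a b) (Host a) (Host b)"
proof -
  have len: "length a = l" "length b = l" using assms by (simp_all add: length_host)
  have path: "desc_path l a b = desc_walk (crossover l a b) b (rev (filter (\<lambda>i. a ! i \<noteq> b ! i) [0..<l]))"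
    using len by (simp add: desc_path_def crossover_length)
  note schedule = descending_schedule_desc_path[OF len(1), of b]
  have "last (desc_path l a b) = Host b"
    unfolding path using last_desc_walk[OF schedule] len by simp
  moreover have "distinct (desc_path l a b)"
    unfolding path using distinct_desc_walk[OF schedule] len by simp
  moreover have "is_arc l d e" if "e \<in> arcs_of (desc_path l a b)" for e
    using arcs_of_desc_path[OF assms that] is_arc_up_arc[OF assms] is_arc_down_arc[OF assms]
    by blast
  ultimately show ?thesis by (simp add: is_dipath_def desc_path_def)
qed

lemma mod_diff_determines:
  fixes x y x' y' d :: nat
  assumes "x < d" "y < d" "x' < d" "y' < d"
    and "nat ((int y - int x) mod int d) = nat ((int y' - int x') mod int d)"
  shows "x = x' \<longleftrightarrow> y = y'"
proof -
  have eq: "(int y - int x) mod int d = (int y' - int x') mod int d"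
    using assms(1,5) by (simp add: eq_nat_nat_iff)
  have "int y = ((int y - int x) mod int d + int x) mod int d"
       "int y' = ((int y' - int x') mod int d + int x') mod int d"
    using assms by (simp_all add: mod_add_left_eq)
  moreover have "int x = (int y - (int y - int x) mod int d) mod int d"
       "int x' = (int y' - (int y' - int x') mod int d) mod int d"
    using assms by (simp_all add: mod_diff_right_eq)
  ultimately show ?thesis using eq by auto
qed

lemma nth_wavelength:
  "length a = length b \<Longrightarrow> j < length a \<Longrightarrow>
    wavelength d a b ! j = nat ((int (b ! j) - int (a ! j)) mod int d)"
  by (simp add: wavelength_def)

lemma wavelength_crossover_inj:
  assumes hosts: "a \<in> host_set l d" "b \<in> host_set l d" "a' \<in> host_set l d" "b' \<in> host_set l d"
    and "crossover m a b = crossover m a' b'" and "wavelength d a b = wavelength d a' b'"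
  shows "a = a' \<and> b = b'"
proof -
  have len: "length a = l" "length b = l" "length a' = l" "length b' = l"
    using hosts by (simp_all add: length_host)
  have "a ! j = a' ! j \<and> b ! j = b' ! j" if j: "j < l" for j
  proof -
    have "crossover m a b ! j = crossover m a' b' ! j" using assms(5) by simp
    then have "a ! j = a' ! j \<or> b ! j = b' ! j" using j len by (simp add: nth_crossover split: if_splits)
    moreover have "wavelength d a b ! j = wavelength d a' b' ! j" using assms(6) by simp
    then have "a ! j = a' ! j \<longleftrightarrow> b ! j = b' ! j"
      using j len hosts by (intro mod_diff_determines) (simp_all add: nth_wavelength nth_host_less)
    ultimately show ?thesis by blast
  qed
  then show ?thesis using len by (simp add: list_eq_iff_nth_eq)
qed

lemma wavelength_coloring_proper:
  "proper_coloring l d (\<lambda>(a, b). desc_path l a b) (\<lambda>(a, b). wavelength d a b)"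
  unfolding proper_coloring_def
proof (intro ballI impI)
  fix p q
  assume "p \<in> host_pairs l d" "q \<in> host_pairs l d"
    and distinct_shared: "p \<noteq> q \<and> arcs_of ((\<lambda>(a, b). desc_path l a b) p)
      \<inter> arcs_of ((\<lambda>(a, b). desc_path l a b) q) \<noteq> {}"
  then obtain a b a' b' where pq: "p = (a, b)" "q = (a', b')"
    and hosts: "a \<in> host_set l d" "b \<in> host_set l d" "a' \<in> host_set l d" "b' \<in> host_set l d"
    by (force simp: host_pairs_def)
  obtain e where e: "e \<in> arcs_of (desc_path l a b)" "e \<in> arcs_of (desc_path l a' b')"
    using distinct_shared pq by auto
  obtain i i' where "e = up_arc a b i \<or> e = down_arc a b i" "e = up_arc a' b' i' \<or> e = down_arc a' b' i'"
    using arcs_of_desc_path[OF hosts(1,2) e(1)] arcs_of_desc_path[OF hosts(3,4) e(2)] by blast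
  then obtain m where "crossover m a b = crossover m a' b'"
    by (auto simp: up_arc_def down_arc_def)
  then show "(\<lambda>(a, b). wavelength d a b) p \<noteq> (\<lambda>(a, b). wavelength d a b) q"
    using wavelength_crossover_inj[OF hosts] distinct_shared pq by auto
qed

lemma wavelength_in_host_set:
  assumes "0 < d" "a \<in> host_set l d" "b \<in> host_set l d"
  shows "wavelength d a b \<in> host_set l d"
  using assms by (auto simp: host_set_def wavelength_def nat_less_iff set_zip)

lemma wavelength_neq_zero:
  assumes "a \<in> host_set l d" "b \<in> host_set l d" "a \<noteq> b"
  shows "wavelength d a b \<noteq> replicate l 0"
proof
  assume zero: "wavelength d a b = replicate l 0"
  have len: "length a = l" "length b = l" using assms(1,2) by (simp_all add: length_host)
  then obtain j where j: "j < l" "a ! j \<noteq> b ! j" using assms(3) by (metis nth_equalityI)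
  have "nat ((int (b ! j) - int (a ! j)) mod int d) = nat ((int (b ! j) - int (b ! j)) mod int d)"
    using arg_cong[OF zero, of "\<lambda>w. w ! j"] j len by (simp add: nth_wavelength)
  then have "a ! j = b ! j \<longleftrightarrow> b ! j = b ! j"
    using assms(1,2) j by (intro mod_diff_determines) (simp_all add: nth_host_less)
  then show False using j by simp
qed

lemma card_wavelengths_le:
  assumes "0 < d"
  shows "card ((\<lambda>(a, b). wavelength d a b) ` host_pairs l d) \<le> d ^ l - 1"
proof -
  have "(\<lambda>(a, b). wavelength d a b) ` host_pairs l d \<subseteq> host_set l d - {replicate l 0}"
    using wavelength_in_host_set[OF assms] wavelength_neq_zero by (auto simp: host_pairs_def)
  moreover have "replicate l 0 \<in> host_set l d"
    using assms by (simp add: host_set_def)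
  then have "card (host_set l d - {replicate l 0}) = d ^ l - 1"
    by (simp add: card_host_set)
  ultimately show ?thesis by (metis card_mono finite_Diff finite_host_set)
qed

lemma remove_nth_nth_0: "0 < i \<Longrightarrow> 0 < length h \<Longrightarrow> remove_nth i h ! 0 = h ! 0"
  by (simp add: remove_nth_def nth_append)

definition layer1_uplink :: "nat list \<Rightarrow> vertex \<times> vertex" where
  "layer1_uplink h = (Host h, Switch 1 (remove_nth 0 h))"

definition zero_side :: "vertex set" where
  "zero_side = {Host h |h. h ! 0 = 0} \<union> {Switch k s |k s. k \<noteq> 1 \<and> s ! 0 = 0}"

lemma arc_leaving_zero_side:
  assumes "is_arc l d (u, v)" "u \<in> zero_side" "v \<notin> zero_side"
  shows "\<exists>h\<in>host_set l d. h ! 0 = 0 \<and> (u, v) = layer1_uplink h"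
proof -
  obtain h k where h: "h \<in> host_set l d" "1 \<le> k" "k \<le> l"
    and uv: "(u, v) = (Host h, Switch k (remove_nth (k - 1) h))
      \<or> (u, v) = (Switch k (remove_nth (k - 1) h), Host h)"
    using assms(1) by (auto simp: is_arc_def)
  have layer: "remove_nth (k - 1) h ! 0 = h ! 0" if "k \<noteq> 1"
    using that h by (simp add: remove_nth_nth_0 length_host)
  show ?thesis
    using uv
  proof
    assume up: "(u, v) = (Host h, Switch k (remove_nth (k - 1) h))"
    have "k = 1"
    proof (rule ccontr)
      assume "k \<noteq> 1"
      then have "v \<in> zero_side" using up assms(2) layer by (auto simp: zero_side_def)
      then show False using assms(3) by contradiction
    qed
    then show ?thesis using up assms(2) h(1) by (auto simp: zero_side_def layer1_uplink_def)
  next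
    assume "(u, v) = (Switch k (remove_nth (k - 1) h), Host h)"
    then show ?thesis using assms(2,3) layer by (auto simp: zero_side_def)
  qed
qed

lemma dipath_uses_layer1_uplink:
  assumes "is_dipath l d p (Host x) (Host y)" "x ! 0 = 0" "y ! 0 \<noteq> 0"
  shows "\<exists>h\<in>host_set l d. h ! 0 = 0 \<and> layer1_uplink h \<in> arcs_of p"
proof -
  obtain u v where "(u, v) \<in> arcs_of p" "u \<in> zero_side" "v \<notin> zero_side"
    using arcs_of_exit[of p zero_side] assms by (auto simp: is_dipath_def zero_side_def)
  then show ?thesis
    using arc_leaving_zero_side[of l d u v] assms(1) by (metis is_dipath_def)
qed

lemma card_le_colors_of_shared_arc:
  assumes "proper_coloring l d R c" "P \<subseteq> host_pairs l d" "\<And>p. p \<in> P \<Longrightarrow> e \<in> arcs_of (R p)"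
  shows "card P \<le> card (c ` host_pairs l d)"
proof -
  have "c p \<noteq> c q" if "p \<in> P" "q \<in> P" "p \<noteq> q" for p q
  proof -
    have "arcs_of (R p) \<inter> arcs_of (R q) \<noteq> {}" using assms(3) that(1,2) by blast
    then show ?thesis using assms(1,2) that unfolding proper_coloring_def by blast
  qed
  then have "inj_on c P" by (meson inj_onI)
  then have "card P = card (c ` P)" by (simp add: card_image)
  also have "\<dots> \<le> card (c ` host_pairs l d)"
    using assms(2) by (intro card_mono) auto
  finally show ?thesis .
qed

lemma card_hosts_first_zero:
  assumes "1 \<le> l" "0 < d"
  shows "card {h \<in> host_set l d. h ! 0 = 0} = d ^ (l - 1)"
proof -
  have "{h \<in> host_set l d. h ! 0 = 0} = Cons 0 ` host_set (l - 1) d"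
  proof (intro set_eqI iffI)
    fix h assume h: "h \<in> {h \<in> host_set l d. h ! 0 = 0}"
    with assms(1) obtain ys where "h = 0 # ys"
      by (cases h) (auto simp: host_set_def)
    with h show "h \<in> Cons 0 ` host_set (l - 1) d" by (auto simp: host_set_def)
  qed (use assms in \<open>auto simp: host_set_def\<close>)
  then show ?thesis by (simp add: card_image card_host_set)
qed

lemma pigeonhole_relation:
  assumes "finite A" "finite B" "B \<noteq> {}" "\<And>x. x \<in> A \<Longrightarrow> \<exists>y\<in>B. P x y"
  obtains y where "y \<in> B" "card A \<le> card {x \<in> A. P x y} * card B"
proof -
  obtain f where f: "\<forall>x\<in>A. f x \<in> B \<and> P x (f x)"
    using bchoice[of A "\<lambda>x y. y \<in> B \<and> P x y"] assms(4) by blast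
  then have "f \<in> A \<rightarrow> B" by blast
  then obtain y where "y \<in> B" and y: "card A \<le> card (f -` {y} \<inter> A) * card B"
    using pigeonhole_card[of f A B] assms(1-3) by blast
  have "card (f -` {y} \<inter> A) \<le> card {x \<in> A. P x y}"
    using f assms(1) by (intro card_mono) auto
  then have "card A \<le> card {x \<in> A. P x y} * card B"
    using y by (meson le_trans mult_le_mono1)
  then show ?thesis using \<open>y \<in> B\<close> that by blast
qed

lemma card_colors_ge:
  assumes "1 \<le> l" "0 < d" "is_routing l d R" "proper_coloring l d R c"
  shows "d ^ l - d ^ (l - 1) \<le> card (c ` host_pairs l d)"
proof -
  define S where "S = {h \<in> host_set l d. h ! 0 = 0}"
  define T where "T = host_set l d - S"
  have card_S: "card S = d ^ (l - 1)"
    using card_hosts_first_zero[OF assms(1,2)] by (simp add: S_def)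
  have card_T: "card T = d ^ l - d ^ (l - 1)"
    unfolding T_def using card_S by (subst card_Diff_subset) (auto simp: S_def card_host_set)
  have pairs: "S \<times> T \<subseteq> host_pairs l d"
    by (auto simp: S_def T_def host_pairs_def)
  have "\<exists>h\<in>S. layer1_uplink h \<in> arcs_of (R pr)" if "pr \<in> S \<times> T" for pr
  proof -
    obtain x y where xy: "pr = (x, y)" by force
    then have "x ! 0 = 0" "y ! 0 \<noteq> 0" "(x, y) \<in> host_pairs l d"
      using that pairs by (auto simp: S_def T_def)
    moreover from this(3) have "is_dipath l d (R (x, y)) (Host x) (Host y)"
      using assms(3) unfolding is_routing_def by blast
    ultimately show ?thesis
      using dipath_uses_layer1_uplink[of l d "R (x, y)" x y] xy by (auto simp: S_def)
  qed
  moreover have "finite S" "finite (S \<times> T)" by (simp_all add: S_def T_def)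
  moreover have "replicate l 0 \<in> S" using assms(1,2) by (simp add: S_def host_set_def)
  then have "S \<noteq> {}" by blast
  ultimately obtain h where
    h: "card (S \<times> T) \<le> card {pr \<in> S \<times> T. layer1_uplink h \<in> arcs_of (R pr)} * card S"
    using pigeonhole_relation[of "S \<times> T" S "\<lambda>pr h. layer1_uplink h \<in> arcs_of (R pr)"] by blast
  have "0 < card S" using card_S assms(2) by simp
  with h have "card T \<le> card {pr \<in> S \<times> T. layer1_uplink h \<in> arcs_of (R pr)}"
    by (simp add: card_cartesian_product mult.commute[of "card S"])
  also have "\<dots> \<le> card (c ` host_pairs l d)"
    using pairs by (intro card_le_colors_of_shared_arc[OF assms(4)]) auto
  finally show ?thesis unfolding card_T .
qed

lemma omega_R_ge:
  assumes "1 \<le> l" "0 < d" "is_routing l d R"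
  shows "d ^ l - d ^ (l - 1) \<le> omega_R l d R"
  unfolding omega_R_def
proof (rule LeastI2_ex)
  have "proper_coloring l d R to_nat"
    by (simp add: proper_coloring_def)
  then show "\<exists>k. \<exists>c :: nat list \<times> nat list \<Rightarrow> nat.
      proper_coloring l d R c \<and> card (c ` host_pairs l d) = k"
    by blast
qed (use card_colors_ge[OF assms] in blast)

lemma omega_R_le_card:
  fixes c :: "nat list \<times> nat list \<Rightarrow> 'c::countable"
  assumes "proper_coloring l d R c"
  shows "omega_R l d R \<le> card (c ` host_pairs l d)"
proof -
  have "proper_coloring l d R (to_nat \<circ> c)"
    using assms by (simp add: proper_coloring_def)
  then have "omega_R l d R \<le> card ((to_nat \<circ> c) ` host_pairs l d)"
    unfolding omega_R_def by (intro Least_le) blast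
  also have "\<dots> = card (c ` host_pairs l d)"
    unfolding image_comp[symmetric] by (rule card_image) (simp add: inj_on_def)
  finally show ?thesis .
qed

lemma optical_index_ge:
  assumes "1 \<le> l" "0 < d" "is_routing l d R"
  shows "d ^ l - d ^ (l - 1) \<le> optical_index l d"
  unfolding optical_index_def
  by (rule LeastI2_ex) (use assms(3) omega_R_ge[OF assms(1,2)] in blast)+

lemma optical_index_le: "is_routing l d R \<Longrightarrow> optical_index l d \<le> omega_R l d R"
  unfolding optical_index_def by (intro Least_le) blast

theorem mainTheorem5:
  fixes l d :: nat
  assumes "l \<ge> 1" and "d \<ge> 2"
  shows "is_routing l d (\<lambda>(a, b). desc_path l a b)
    \<and> proper_coloring l d (\<lambda>(a, b). desc_path l a b) (\<lambda>(a, b). wavelength d a b)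
    \<and> card ((\<lambda>(a, b). wavelength d a b) ` host_pairs l d) \<le> d ^ l - 1
    \<and> d ^ l - d ^ (l - 1) \<le> optical_index l d
    \<and> optical_index l d \<le> d ^ l - 1"
proof -
  let ?R = "\<lambda>(a, b). desc_path l a b"
  let ?w = "\<lambda>(a, b). wavelength d a b"
  have d: "0 < d" using assms(2) by simp
  have routing: "is_routing l d ?R"
    by (auto simp: is_routing_def host_pairs_def desc_path_is_dipath)
  have proper: "proper_coloring l d ?R ?w"
    by (rule wavelength_coloring_proper)
  have few: "card (?w ` host_pairs l d) \<le> d ^ l - 1"
    using card_wavelengths_le[OF d] .
  have "optical_index l d \<le> d ^ l - 1"
    using optical_index_le[OF routing] omega_R_le_card[OF proper] few by linarith
  then show ?thesis
    using routing proper few optical_index_ge[OF assms(1) d routing] by blast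
qed

end
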